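(* Let $\phi(fx_1\dots x_q, fy_1\dots y_q)$ be a first-order formula in which the $q$-ary function symbol $f$ has an occurrence of the form $fx_1\dots x_q$ and an occurrence of the form $fy_1\dots y_q$, where $x_1,\dots,x_q,y_1,\dots,y_q$ are variables with $\{x_1,\dots,x_q\}\cap\{y_1,\dots,y_q\}=\emptyset$. Let $g$ be a new $q$-ary function variable and let $\phi(fx_1\dots x_q,gy_1\dots y_q)$ be obtained from $\phi$ by replacing everywhere $fy_1\dots y_q$ by $gy_1\dots y_q$. Then the following second-order formula is valid: \[\forall x_1\dots\forall x_q\forall y_1\dots\forall y_q\,\phi(fx_1\dots x_q,fy_1\dots y_q)\leftrightarrow\exists g\,\forall x_1\dots\forall x_q\forall y_1\dots\forall y_q\Big(\phi(fx_1\dots x_q,gy_1\dots y_q)\wedge\big((x_1=y_1)\wedge\dots\wedge(x_q=y_q)\to fx_1\dots x_q=gy_1\dots y_q\big)\Big).\]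
   Context: Standard first- and second-order logic with standard semantics; $\models$ denotes validity. *)

theory Defs
  imports Main
begin

end

theory Submission
  imports Defs
begin

text \<open>The side condition \<open>x = y \<longrightarrow> f x = g y\<close>, quantified over all \<open>x\<close> and \<open>y\<close>,
  forces \<open>g = f\<close>; so the existential collapses to its only possible witness \<open>f\<close>.\<close>

lemma eq_if_agree_on_diagonal:
  assumes "\<forall>x y. x = y \<longrightarrow> f x = g y"
  shows "g = f"
  using assms by auto

theorem lemma5p4:
  fixes \<Phi> :: "(('q::finite \<Rightarrow> 'a) \<Rightarrow> 'a) \<Rightarrow> ('q \<Rightarrow> 'a) \<Rightarrow> ('q \<Rightarrow> 'a) \<Rightarrow> 'a \<Rightarrow> 'a \<Rightarrow> bool"
    and f :: "('q \<Rightarrow> 'a) \<Rightarrow> 'a"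
  shows "(\<forall>x y. \<Phi> f x y (f x) (f y)) \<longleftrightarrow>
         (\<exists>g :: ('q \<Rightarrow> 'a) \<Rightarrow> 'a. \<forall>x y. \<Phi> f x y (f x) (g y) \<and> (x = y \<longrightarrow> f x = g y))"
proof
  assume "\<forall>x y. \<Phi> f x y (f x) (f y)"
  then show "\<exists>g. \<forall>x y. \<Phi> f x y (f x) (g y) \<and> (x = y \<longrightarrow> f x = g y)"
    by blast
next
  assume "\<exists>g :: ('q \<Rightarrow> 'a) \<Rightarrow> 'a. \<forall>x y. \<Phi> f x y (f x) (g y) \<and> (x = y \<longrightarrow> f x = g y)"
  then obtain g :: "('q \<Rightarrow> 'a) \<Rightarrow> 'a"
    where \<Phi>_g: "\<forall>x y. \<Phi> f x y (f x) (g y)" and diagonal: "\<forall>x y. x = y \<longrightarrow> f x = g y"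
    by blast
  from diagonal have "g = f"
    by (rule eq_if_agree_on_diagonal)
  with \<Phi>_g show "\<forall>x y. \<Phi> f x y (f x) (f y)"
    by simp
qed

end
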